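(* For all processes $s,t$ of a PTS over $A_\tau$, $s$ and $t$ are weak probabilistic trace equivalent if and only if $\mathcal{L}^{\mathrm{w}}(s)\equiv^\dagger\mathcal{L}^{\mathrm{w}}(t)$, i.e. every formula in $\mathcal{L}^{\mathrm{w}}(s)$ is $\equiv^\dagger$-related to some formula in $\mathcal{L}^{\mathrm{w}}(t)$ and vice versa.
   Context: PTS $(\mathcal{S},A_\tau,\to)$ with $A_\tau=A\cup\{\tau\}$, $\tau$ the silent action, finitely supported distributions; processes image-finite and finite. Computations $c=s_0\xrightarrow{a_1}\cdots\xrightarrow{a_n}s_n$ via transitions $s_{i-1}\xrightarrow{a_i}\pi_i$, $s_i\in\mathrm{supp}(\pi_i)$; $\Pr(c)=\prod\pi_i(s_i)$ (empty: 1); $|c|=n$; $\mathrm{tr}(c)=a_1\cdots a_n$; maximal = not a proper prefix of another computation from the same process; $\mathcal{C}_{\max}(z)$; $\Pr$ of a set is the sum. A resolution of $s$ is a PTS $\mathcal{Z}=(Z,A_\tau,\to_{\mathcal{Z}})$ with $\mathrm{corr}\colon Z\to\mathcal{S}$ and initial state $z_s$, $\mathrm{corr}(z_s)=s$, such that $z_s$ is in no target support, every other state is in the support of a target of a transition from a different state, every $z\xrightarrow{a}_{\mathcal{Z}}\pi$ is matched by $\mathrm{corr}(z)\xrightarrow{a}\pi'$ with $\pi(z')=\pi'(\mathrm{corr}(z'))$, and each state has at most one outgoing transition; $\mathrm{res}(s)$ the set of resolutions. Traces $\alpha\equiv\beta$ iff they coincide after deleting all $\tau$'s. For $\alpha\in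 A^\star$, $\mathcal{C}^{\mathrm{w}}(z,\alpha)$ is the set of computations $c$ from $z$ with $\mathrm{tr}(c)\equiv\alpha$ that are not proper prefixes of another computation $c'$ from $z$ with $\mathrm{tr}(c')\equiv\alpha$. $s,t$ are weak probabilistic trace equivalent iff for every $\mathcal{Z}_s\in\mathrm{res}(s)$ there is $\mathcal{Z}_t\in\mathrm{res}(t)$ with $\Pr(\mathcal{C}^{\mathrm{w}}(z_s,\alpha))=\Pr(\mathcal{C}^{\mathrm{w}}(z_t,\alpha))$ for all $\alpha\in A^\star$, and symmetrically. Logic $\mathcal{L}^{\mathrm{w}}$: trace formulae $\Phi::=\top\mid\langle a\rangle\Phi$ with $a\in A_\tau$, $\mathrm{depth}(\top)=0$, $\mathrm{depth}(\langle a\rangle\Phi)=1+\mathrm{depth}(\Phi)$; trace distribution formulae $\bigoplus_{i\in I}r_i\Phi_i$ ($I$ finite nonempty, $\Phi_i$ pairwise distinct, $r_i\in(0,1]$, $\sum r_i=1$), viewed as distributions on trace formulae. $c\models\top$ always; $c\models\langle a\rangle\Phi$ iff $c=s\xrightarrow{a}c'$ with $c'\models\Phi$. $s\models\bigoplus_i r_i\Phi_i$ iff some $\mathcal{Z}\in\mathrm{res}(s)$ with initial state $z$ satisfies $\Pr(\{c\in\mathcal{C}_{\max}(z):c\models\Phi_i,|c|=\mathrm{depth}(\Phi_i)\})=r_i$ for all $i$. $\mathcal{L}^{\mathrm{w}}(s)$ is the set of trace distribution formulae satisfied by $s$. Every trace formula is $\Phi_\alpha$ for a unique $\alpha\in A_\tau^\star$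 ($\Phi_\varepsilon=\top$, $\Phi_{a\alpha}=\langle a\rangle\Phi_\alpha$); $\Phi_\alpha\equiv\Phi_\beta$ iff $\alpha\equiv\beta$; $\Psi_1\equiv^\dagger\Psi_2$ iff $\Psi_1,\Psi_2$ assign the same total probability to every $\equiv$-class of trace formulae. *)

theory Defs
  imports "HOL-Probability.Probability_Mass_Function"
begin

datatype 'a act = Tau | Act 'a

type_synonym ('s, 'a) pts = "('s \<times> 'a act \<times> 's pmf) set"

type_synonym ('s, 'a) comp = "('a act \<times> 's pmf \<times> 's) list"

inductive is_comp :: "('s, 'a) pts \<Rightarrow> 's \<Rightarrow> ('s, 'a) comp \<Rightarrow> bool" for T where
  comp_Nil: "is_comp T s []"
| comp_Cons: "(s, a, \<pi>) \<in> T \<Longrightarrow> s' \<in> set_pmf \<pi> \<Longrightarrow> is_comp T s' c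
              \<Longrightarrow> is_comp T s ((a, \<pi>, s') # c)"

definition comps :: "('s, 'a) pts \<Rightarrow> 's \<Rightarrow> ('s, 'a) comp set" where
  "comps T s = {c. is_comp T s c}"

fun prob_comp :: "('s, 'a) comp \<Rightarrow> real" where
  "prob_comp [] = 1"
| "prob_comp ((a, \<pi>, s') # c) = pmf \<pi> s' * prob_comp c"

definition prob_set :: "('s, 'a) comp set \<Rightarrow> real" where
  "prob_set C = (\<Sum>c\<in>C. prob_comp c)"

definition trace :: "('s, 'a) comp \<Rightarrow> 'a act list" where
  "trace c = map fst c"

definition proper_prefix :: "'x list \<Rightarrow> 'x list \<Rightarrow> bool" where
  "proper_prefix c c' \<longleftrightarrow> (\<exists>d. d \<noteq> [] \<and> c' = c @ d)"

definition max_comps :: "('s, 'a) pts \<Rightarrow> 's \<Rightarrow> ('s, 'a) comp set" where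
  "max_comps T s = {c \<in> comps T s. \<not> (\<exists>c'\<in>comps T s. proper_prefix c c')}"

fun vis :: "'a act list \<Rightarrow> 'a list" where
  "vis [] = []"
| "vis (Tau # xs) = vis xs"
| "vis (Act a # xs) = a # vis xs"

definition trace_equiv :: "'a act list \<Rightarrow> 'a act list \<Rightarrow> bool" where
  "trace_equiv \<alpha> \<beta> \<longleftrightarrow> vis \<alpha> = vis \<beta>"

definition weak_comps :: "('s, 'a) pts \<Rightarrow> 's \<Rightarrow> 'a list \<Rightarrow> ('s, 'a) comp set" where
  "weak_comps T z \<alpha> = {c \<in> comps T z. vis (trace c) = \<alpha> \<and>
      \<not> (\<exists>c'\<in>comps T z. vis (trace c') = \<alpha> \<and> proper_prefix c c')}"

definition is_resolution ::
  "('s, 'a) pts \<Rightarrow> 's \<Rightarrow> nat set \<Rightarrow> (nat, 'a) pts \<Rightarrow> (nat \<Rightarrow> 's) \<Rightarrow> nat \<Rightarrow> bool" where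
  "is_resolution T s Z TZ corr z0 \<longleftrightarrow>
     z0 \<in> Z \<and> corr z0 = s \<and>
     (\<forall>(z, a, \<pi>)\<in>TZ. z \<in> Z \<and> set_pmf \<pi> \<subseteq> Z \<and> finite (set_pmf \<pi>)) \<and>
     (\<forall>(z, a, \<pi>)\<in>TZ. z0 \<notin> set_pmf \<pi>) \<and>
     (\<forall>z\<in>Z. z \<noteq> z0 \<longrightarrow> (\<exists>(z', a, \<pi>)\<in>TZ. z' \<noteq> z \<and> z \<in> set_pmf \<pi>)) \<and>
     (\<forall>(z, a, \<pi>)\<in>TZ. \<exists>\<pi>'. (corr z, a, \<pi>') \<in> T \<and>
          (\<forall>z'\<in>Z. pmf \<pi> z' = pmf \<pi>' (corr z'))) \<and>
     (\<forall>z a1 \<pi>1 a2 \<pi>2. (z, a1, \<pi>1) \<in> TZ \<longrightarrow> (z, a2, \<pi>2) \<in> TZ \<longrightarrow> a1 = a2 \<and> \<pi>1 = \<pi>2)"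

definition wpt_sim :: "('s, 'a) pts \<Rightarrow> 's \<Rightarrow> 's \<Rightarrow> bool" where
  "wpt_sim T s t \<longleftrightarrow>
     (\<forall>Z TZ corr z. is_resolution T s Z TZ corr z \<longrightarrow>
        (\<exists>Z' TZ' corr' z'. is_resolution T t Z' TZ' corr' z' \<and>
           (\<forall>\<alpha>. prob_set (weak_comps TZ z \<alpha>) = prob_set (weak_comps TZ' z' \<alpha>))))"

definition weak_trace_equiv :: "('s, 'a) pts \<Rightarrow> 's \<Rightarrow> 's \<Rightarrow> bool" where
  "weak_trace_equiv T s t \<longleftrightarrow> wpt_sim T s t \<and> wpt_sim T t s"

datatype 'a tform = TTop | Diam "'a act" "'a tform"

fun depth :: "'a tform \<Rightarrow> nat" where
  "depth TTop = 0"
| "depth (Diam a \<Phi>) = Suc (depth \<Phi>)"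

fun tf_trace :: "'a tform \<Rightarrow> 'a act list" where
  "tf_trace TTop = []"
| "tf_trace (Diam a \<Phi>) = a # tf_trace \<Phi>"

fun sat_c :: "('s, 'a) comp \<Rightarrow> 'a tform \<Rightarrow> bool" where
  "sat_c c TTop = True"
| "sat_c [] (Diam a \<Phi>) = False"
| "sat_c ((b, \<pi>, s') # c) (Diam a \<Phi>) = (b = a \<and> sat_c c \<Phi>)"

definition sat :: "('s, 'a) pts \<Rightarrow> 's \<Rightarrow> 'a tform pmf \<Rightarrow> bool" where
  "sat T s \<Psi> \<longleftrightarrow>
     (\<exists>Z TZ corr z. is_resolution T s Z TZ corr z \<and>
        (\<forall>\<Phi>\<in>set_pmf \<Psi>.
           prob_set {c \<in> max_comps TZ z. sat_c c \<Phi> \<and> length c = depth \<Phi>} = pmf \<Psi> \<Phi>))"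

definition Lw :: "('s, 'a) pts \<Rightarrow> 's \<Rightarrow> 'a tform pmf set" where
  "Lw T s = {\<Psi>. finite (set_pmf \<Psi>) \<and> sat T s \<Psi>}"

definition tf_equiv :: "'a tform \<Rightarrow> 'a tform \<Rightarrow> bool" where
  "tf_equiv \<Phi> \<Phi>' \<longleftrightarrow> trace_equiv (tf_trace \<Phi>) (tf_trace \<Phi>')"

definition dag_equiv :: "'a tform pmf \<Rightarrow> 'a tform pmf \<Rightarrow> bool" where
  "dag_equiv \<Psi>1 \<Psi>2 \<longleftrightarrow>
     (\<forall>\<Phi>. measure_pmf.prob \<Psi>1 {\<Phi>'. tf_equiv \<Phi>' \<Phi>} = measure_pmf.prob \<Psi>2 {\<Phi>'. tf_equiv \<Phi>' \<Phi>})"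

definition Lset_equiv :: "'a tform pmf set \<Rightarrow> 'a tform pmf set \<Rightarrow> bool" where
  "Lset_equiv L1 L2 \<longleftrightarrow>
     (\<forall>\<Psi>\<in>L1. \<exists>\<Psi>'\<in>L2. dag_equiv \<Psi> \<Psi>') \<and> (\<forall>\<Psi>'\<in>L2. \<exists>\<Psi>\<in>L1. dag_equiv \<Psi> \<Psi>')"

end

theory Submission
  imports Defs "HOL-Library.Sublist"
begin

text \<open>Every state of a resolution has at most one outgoing transition, so a resolution of a
  finite process induces a distribution on the traces of its maximal computations. The trace
  distribution formula satisfied by the resolution is exactly this distribution, read as a
  distribution on trace formulae, and the probability of the weak computations for \<alpha> is the
  probability that \<alpha> is a prefix of the visible part of the trace. Hence both sides of the
  equivalence compare resolutions through the distribution of visible traces: the relation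
  dag_equiv compares it pointwise, weak trace equivalence compares its prefix probabilities, and
  these determine it because traces have bounded length.\<close>

section \<open>Distributions on finite and bounded lists\<close>

lemma pmf_bind_finite_support:
  assumes "finite (set_pmf p)"
  shows "pmf (bind_pmf p f) x = (\<Sum>z\<in>set_pmf p. pmf p z * pmf (f z) x)"
  unfolding pmf_bind by (subst integral_measure_pmf[OF assms]) auto

lemma measure_bind_pmf_finite_support:
  assumes "finite (set_pmf p)"
  shows "measure_pmf.prob (bind_pmf p f) A = (\<Sum>z\<in>set_pmf p. pmf p z * measure_pmf.prob (f z) A)"
proof -
  have "measure_pmf.prob (bind_pmf p f) A = pmf (map_pmf (\<lambda>x. x \<in> A) (bind_pmf p f)) True"
    by (simp add: pmf_map vimage_def)
  also have "\<dots> = pmf (bind_pmf p (\<lambda>z. map_pmf (\<lambda>x. x \<in> A) (f z))) True"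
    by (simp add: map_bind_pmf)
  finally show ?thesis
    by (simp add: pmf_bind_finite_support[OF assms] pmf_map vimage_def)
qed

lemma pmf_map_Cons:
  "pmf (map_pmf (Cons a) p) \<beta> = (case \<beta> of [] \<Rightarrow> 0 | b # \<gamma> \<Rightarrow> if b = a then pmf p \<gamma> else 0)"
  by (auto simp: pmf_map_inj' intro!: pmf_map_outside split: list.split)

lemma pmf_eqI_finite_support:
  assumes fin: "finite (set_pmf p)" and eq: "\<And>x. x \<in> set_pmf p \<Longrightarrow> pmf p x = pmf q x"
  shows "p = q"
proof -
  have "measure_pmf.prob q (set_pmf p) = 1"
    using fin eq sum_pmf_eq_1[OF fin order_refl] by (simp add: measure_measure_pmf_finite)
  then have "set_pmf q \<subseteq> set_pmf p"
    by (subst (asm) measure_pmf.prob_eq_1) (auto simp: AE_measure_pmf_iff)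
  then show ?thesis
    using eq by (intro pmf_eqI) (metis in_mono set_pmf_iff)
qed

lemma measure_pmf_prob_cong:
  assumes "\<And>x. x \<in> A \<Longrightarrow> pmf p x = pmf q x"
  shows "measure_pmf.prob p A = measure_pmf.prob q A"
  using assms by (simp add: measure_pmf_conv_infsetsum cong: infsetsum_cong)

lemma measure_pmf_prefix_split:
  "measure_pmf.prob Q {h. prefix g h} = pmf Q g + measure_pmf.prob Q {h. strict_prefix g h}"
proof -
  have "measure_pmf.prob Q ({g} \<union> {h. strict_prefix g h}) =
      pmf Q g + measure_pmf.prob Q {h. strict_prefix g h}"
    by (subst measure_pmf.finite_measure_Union) (auto simp: measure_pmf_single)
  moreover have "{g} \<union> {h. strict_prefix g h} = {h. prefix g h}"
    by (auto simp: strict_prefix_def)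
  ultimately show ?thesis
    by simp
qed

text \<open>Induction on the length of g from above, since the mass of g is the mass of the
  cylinder above g minus that of the strictly longer lists in it.\<close>

lemma pmf_eqI_prefix:
  fixes Q1 Q2 :: "'x list pmf"
  assumes bounded: "set_pmf Q1 \<subseteq> {g. length g \<le> N}" "set_pmf Q2 \<subseteq> {g. length g \<le> N}"
    and eq: "\<And>g. measure_pmf.prob Q1 {h. prefix g h} = measure_pmf.prob Q2 {h. prefix g h}"
  shows "Q1 = Q2"
proof -
  have "pmf Q1 g = pmf Q2 g" if "N < length g + k" for g k
    using that
  proof (induction k arbitrary: g)
    case 0
    then show ?case
      using bounded by (simp add: set_pmf_eq subset_iff) (metis not_le)
  next
    case (Suc k)
    have "measure_pmf.prob Q1 {h. strict_prefix g h} = measure_pmf.prob Q2 {h. strict_prefix g h}"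
    proof (rule measure_pmf_prob_cong)
      fix h assume "h \<in> {h. strict_prefix g h}"
      then have "length g < length h"
        by (simp add: prefix_length_less)
      then show "pmf Q1 h = pmf Q2 h"
        using Suc by simp
    qed
    then show ?case
      using eq[of g] by (simp add: measure_pmf_prefix_split)
  qed
  from this[of _ "Suc N"] show ?thesis
    by (intro pmf_eqI) simp
qed

section \<open>Computations of deterministic systems\<close>

lemma trace_Nil [simp]: "trace [] = []"
  and trace_Cons [simp]: "trace ((a, \<pi>, z) # c) = a # trace c"
  by (simp_all add: trace_def)

lemma is_comp_Cons_iff [simp]:
  "is_comp T z ((a, \<pi>, z') # c) \<longleftrightarrow> (z, a, \<pi>) \<in> T \<and> z' \<in> set_pmf \<pi> \<and> is_comp T z' c"
  by (auto elim: is_comp.cases intro: comp_Cons)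

lemma proper_prefix_eq_strict_prefix: "proper_prefix = strict_prefix"
  by (auto simp: fun_eq_iff proper_prefix_def strict_prefix_def prefix_def)

lemma strict_prefix_Cons_left:
  "strict_prefix (x # c) c' \<longleftrightarrow> (\<exists>c''. c' = x # c'' \<and> strict_prefix c c'')"
  by (cases c') auto

definition deterministic_pts :: "('s, 'a) pts \<Rightarrow> bool" where
  "deterministic_pts T \<longleftrightarrow> (\<forall>(z, a, \<pi>)\<in>T. finite (set_pmf \<pi>)) \<and>
     (\<forall>z a1 \<pi>1 a2 \<pi>2. (z, a1, \<pi>1) \<in> T \<longrightarrow> (z, a2, \<pi>2) \<in> T \<longrightarrow> a1 = a2 \<and> \<pi>1 = \<pi>2)"

lemma finite_set_pmf_transition:
  "deterministic_pts T \<Longrightarrow> (z, a, \<pi>) \<in> T \<Longrightarrow> finite (set_pmf \<pi>)"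
  unfolding deterministic_pts_def by blast

definition bounded_comps :: "('s, 'a) pts \<Rightarrow> nat \<Rightarrow> 's \<Rightarrow> bool" where
  "bounded_comps T n z \<longleftrightarrow> (\<forall>c\<in>comps T z. length c \<le> n)"

lemma bounded_comps_step:
  assumes "bounded_comps T (Suc n) z" "(z, a, \<pi>) \<in> T" "z' \<in> set_pmf \<pi>"
  shows "bounded_comps T n z'"
  unfolding bounded_comps_def
proof
  fix c
  assume "c \<in> comps T z'"
  then have "(a, \<pi>, z') # c \<in> comps T z"
    using assms(2,3) by (simp add: comps_def)
  then show "length c \<le> n"
    using assms(1) unfolding bounded_comps_def by fastforce
qed

lemma bounded_comps_0_final:
  assumes "bounded_comps T 0 z"
  shows "(z, a, \<pi>) \<notin> T"
proof
  assume "(z, a, \<pi>) \<in> T"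
  obtain z' where "z' \<in> set_pmf \<pi>"
    using set_pmf_not_empty by fast
  with \<open>(z, a, \<pi>) \<in> T\<close> have "[(a, \<pi>, z')] \<in> comps T z"
    by (simp add: comps_def comp_Nil)
  then show False
    using assms by (fastforce simp: bounded_comps_def)
qed

lemma bounded_comps_induct [consumes 1, case_names final step]:
  assumes "bounded_comps T n z"
    and final: "\<And>n z. (\<And>a \<pi>. (z, a, \<pi>) \<notin> T) \<Longrightarrow> P n z"
    and step: "\<And>n z a \<pi>. (z, a, \<pi>) \<in> T \<Longrightarrow> bounded_comps T (Suc n) z \<Longrightarrow>
      (\<And>z'. z' \<in> set_pmf \<pi> \<Longrightarrow> P n z') \<Longrightarrow> P (Suc n) z"
  shows "P n z"
  using assms(1)
proof (induction n arbitrary: z)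
  case 0
  then show ?case
    by (intro final) (rule bounded_comps_0_final)
next
  case (Suc n)
  show ?case
  proof (cases "\<exists>a \<pi>. (z, a, \<pi>) \<in> T")
    case True
    then obtain a \<pi> where "(z, a, \<pi>) \<in> T"
      by blast
    with Suc show ?thesis
      by (intro step[of z a \<pi>]) (simp_all add: bounded_comps_step)
  next
    case False
    then show ?thesis
      by (intro final) simp
  qed
qed

definition step_comps :: "'a act \<Rightarrow> 's pmf \<Rightarrow> ('s \<Rightarrow> ('s, 'a) comp set) \<Rightarrow> ('s, 'a) comp set" where
  "step_comps a \<pi> C = (\<lambda>(z', c). (a, \<pi>, z') # c) ` (SIGMA z':set_pmf \<pi>. C z')"

lemma Nil_notin_step_comps [simp]: "[] \<notin> step_comps a \<pi> C"
  and Cons_mem_step_comps [simp]: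
    "(b, \<rho>, z') # c \<in> step_comps a \<pi> C \<longleftrightarrow> b = a \<and> \<rho> = \<pi> \<and> z' \<in> set_pmf \<pi> \<and> c \<in> C z'"
  by (auto simp: step_comps_def)

lemma step_comps_nonempty: "\<exists>c. c \<in> step_comps a \<pi> (comps T)"
proof -
  obtain z' where "z' \<in> set_pmf \<pi>"
    using set_pmf_not_empty by fast
  then have "[(a, \<pi>, z')] \<in> step_comps a \<pi> (comps T)"
    by (simp add: comps_def comp_Nil)
  then show ?thesis ..
qed

lemma step_comps_Collect:
  "{c \<in> step_comps a \<pi> C. P c} = step_comps a \<pi> (\<lambda>z'. {c \<in> C z'. P ((a, \<pi>, z') # c)})"
  by (auto simp: step_comps_def)

lemma finite_step_comps:
  "finite (set_pmf \<pi>) \<Longrightarrow> (\<And>z'. z' \<in> set_pmf \<pi> \<Longrightarrow> finite (C z')) \<Longrightarrow> finite (step_comps a \<pi> C)"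
  unfolding step_comps_def by (intro finite_imageI finite_SigmaI)

lemma prob_set_step_comps:
  assumes "finite (set_pmf \<pi>)" "\<And>z'. z' \<in> set_pmf \<pi> \<Longrightarrow> finite (C z')"
  shows "prob_set (step_comps a \<pi> C) = (\<Sum>z'\<in>set_pmf \<pi>. pmf \<pi> z' * prob_set (C z'))"
proof -
  have "inj_on (\<lambda>(z', c). (a, \<pi>, z') # c) (SIGMA z':set_pmf \<pi>. C z')"
    by (auto simp: inj_on_def)
  then have "prob_set (step_comps a \<pi> C) =
      (\<Sum>(z', c)\<in>(SIGMA z':set_pmf \<pi>. C z'). pmf \<pi> z' * prob_comp c)"
    unfolding step_comps_def prob_set_def by (simp add: sum.reindex case_prod_unfold)
  also have "\<dots> = (\<Sum>z'\<in>set_pmf \<pi>. \<Sum>c\<in>C z'. pmf \<pi> z' * prob_comp c)"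
    using assms by (simp add: sum.Sigma)
  finally show ?thesis
    by (simp add: prob_set_def sum_distrib_left)
qed

lemma comps_final:
  assumes "\<And>a \<pi>. (z, a, \<pi>) \<notin> T"
  shows "comps T z = {[]}"
proof -
  have "is_comp T z c \<Longrightarrow> c = []" for c
    using assms by (cases c) auto
  then show ?thesis
    by (auto simp: comps_def intro: comp_Nil)
qed

lemma comps_step:
  assumes "deterministic_pts T" "(z, a, \<pi>) \<in> T"
  shows "comps T z = insert [] (step_comps a \<pi> (comps T))"
proof (intro set_eqI)
  have unique: "b = a \<and> \<rho> = \<pi>" if "(z, b, \<rho>) \<in> T" for b \<rho>
    using assms that unfolding deterministic_pts_def by blast
  fix c
  show "c \<in> comps T z \<longleftrightarrow> c \<in> insert [] (step_comps a \<pi> (comps T))"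
    using assms(2) by (cases c) (auto simp: comps_def intro: comp_Nil dest: unique)
qed

lemma finite_comps:
  assumes "deterministic_pts T" "bounded_comps T n z"
  shows "finite (comps T z)"
  using assms(2)
proof (induction rule: bounded_comps_induct)
  case (final n z)
  then show ?case
    by (simp add: comps_final)
next
  case (step n z a \<pi>)
  then show ?case
    by (simp add: comps_step[OF assms(1)] finite_step_comps finite_set_pmf_transition[OF assms(1)])
qed

definition maximal_comps :: "('s, 'a) pts \<Rightarrow> 's \<Rightarrow> (('s, 'a) comp \<Rightarrow> bool) \<Rightarrow> ('s, 'a) comp set" where
  "maximal_comps T z P = {c \<in> comps T z. P c \<and> \<not> (\<exists>c'\<in>comps T z. P c' \<and> strict_prefix c c')}"

lemma max_comps_eq_maximal_comps: "max_comps T z = maximal_comps T z (\<lambda>_. True)"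
  by (simp add: max_comps_def maximal_comps_def proper_prefix_eq_strict_prefix)

lemma weak_comps_eq_maximal_comps: "weak_comps T z \<alpha> = maximal_comps T z (\<lambda>c. vis (trace c) = \<alpha>)"
  by (simp add: weak_comps_def maximal_comps_def proper_prefix_eq_strict_prefix)

lemma maximal_comps_final:
  assumes "\<And>a \<pi>. (z, a, \<pi>) \<notin> T"
  shows "maximal_comps T z P = (if P [] then {[]} else {})"
  by (auto simp: maximal_comps_def comps_final[OF assms])

lemma maximal_comps_step:
  assumes "deterministic_pts T" "(z, a, \<pi>) \<in> T"
  shows "maximal_comps T z P =
    (if P [] \<and> \<not> (\<exists>c\<in>step_comps a \<pi> (comps T). P c) then {[]} else {}) \<union>
    step_comps a \<pi> (\<lambda>z'. maximal_comps T z' (\<lambda>c. P ((a, \<pi>, z') # c)))"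
    (is "_ = ?R")
proof (intro set_eqI)
  fix c
  show "c \<in> maximal_comps T z P \<longleftrightarrow> c \<in> ?R"
  proof (cases c)
    case Nil
    have "strict_prefix [] c'" if "c' \<in> step_comps a \<pi> C" for c' C
      using that by (cases c') auto
    then show ?thesis
      using Nil unfolding maximal_comps_def comps_step[OF assms] by auto
  next
    case (Cons x d)
    then show ?thesis
      unfolding maximal_comps_def comps_step[OF assms]
      by (cases x) (auto simp: strict_prefix_Cons_left)
  qed
qed

lemma max_comps_step:
  assumes "deterministic_pts T" "(z, a, \<pi>) \<in> T"
  shows "max_comps T z = step_comps a \<pi> (max_comps T)"
  using step_comps_nonempty[of a \<pi> T]
  by (simp add: max_comps_eq_maximal_comps[abs_def] maximal_comps_step[OF assms])

lemma weak_comps_step_Tau: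
  assumes "deterministic_pts T" "(z, Tau, \<pi>) \<in> T"
  shows "weak_comps T z \<alpha> = step_comps Tau \<pi> (\<lambda>z'. weak_comps T z' \<alpha>)"
proof -
  obtain z' where "z' \<in> set_pmf \<pi>"
    using set_pmf_not_empty by fast
  then have one_step: "[(Tau, \<pi>, z')] \<in> step_comps Tau \<pi> (comps T)"
    by (simp add: comps_def comp_Nil)
  have "\<alpha> = [] \<Longrightarrow> \<exists>c\<in>step_comps Tau \<pi> (comps T). vis (trace c) = \<alpha>"
    by (rule bexI[OF _ one_step]) simp
  then show ?thesis
    unfolding weak_comps_eq_maximal_comps maximal_comps_step[OF assms] by auto
qed

lemma weak_comps_step_Act:
  assumes "deterministic_pts T" "(z, Act b, \<pi>) \<in> T"
  shows "weak_comps T z \<alpha> =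
    (if \<alpha> = [] then {[]}
     else if hd \<alpha> = b then step_comps (Act b) \<pi> (\<lambda>z'. weak_comps T z' (tl \<alpha>)) else {})"
proof -
  have "(\<exists>c\<in>step_comps (Act b) \<pi> (comps T). vis (trace c) = []) \<longleftrightarrow> False"
    by (auto simp: step_comps_def)
  moreover have "maximal_comps T z' (\<lambda>c. b # vis (trace c) = \<alpha>) =
      (if \<alpha> \<noteq> [] \<and> hd \<alpha> = b then weak_comps T z' (tl \<alpha>) else {})" for z'
    by (cases \<alpha>) (auto simp: weak_comps_eq_maximal_comps maximal_comps_def)
  ultimately show ?thesis
    unfolding weak_comps_eq_maximal_comps maximal_comps_step[OF assms]
    by (auto simp: step_comps_def)
qed

section \<open>The trace distribution\<close>

text \<open>The argument n is fuel: when no computation from z is longer than n it never cuts a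
  computation short, and trace_dist T n z is the distribution of the traces of the maximal
  computations.\<close>

fun trace_dist :: "('s, 'a) pts \<Rightarrow> nat \<Rightarrow> 's \<Rightarrow> 'a act list pmf" where
  "trace_dist T 0 z = return_pmf []"
| "trace_dist T (Suc n) z =
     (if \<exists>x. (z, x) \<in> T
      then (let (a, \<pi>) = SOME x. (z, x) \<in> T in
            bind_pmf \<pi> (\<lambda>z'. map_pmf (Cons a) (trace_dist T n z')))
      else return_pmf [])"

declare trace_dist.simps(2) [simp del]

lemma trace_dist_final:
  "(\<And>a \<pi>. (z, a, \<pi>) \<notin> T) \<Longrightarrow> trace_dist T n z = return_pmf []"
  by (cases n) (auto simp: trace_dist.simps(2))

lemma trace_dist_step:
  assumes "deterministic_pts T" "(z, a, \<pi>) \<in> T"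
  shows "trace_dist T (Suc n) z = bind_pmf \<pi> (\<lambda>z'. map_pmf (Cons a) (trace_dist T n z'))"
proof -
  have "(SOME x. (z, x) \<in> T) = (a, \<pi>)"
  proof (rule some_equality)
    show "\<And>x. (z, x) \<in> T \<Longrightarrow> x = (a, \<pi>)"
      using assms unfolding deterministic_pts_def by fast
  qed (rule assms(2))
  then show ?thesis
    using assms(2) by (auto simp: trace_dist.simps(2))
qed

lemma set_trace_dist: "set_pmf (trace_dist T n z) \<subseteq> {\<beta>. length \<beta> \<le> n}"
proof (induction n arbitrary: z)
  case (Suc n)
  then show ?case
    by (auto simp: trace_dist.simps(2) split_beta) fastforce
qed simp

lemma length_vis_le: "length (vis \<beta>) \<le> length \<beta>"
  by (induction \<beta> rule: vis.induct) auto

lemma length_vis_trace_dist: "\<beta> \<in> set_pmf (trace_dist T n z) \<Longrightarrow> length (vis \<beta>) \<le> n"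
  using set_trace_dist[of T n z] length_vis_le[of \<beta>] by auto

lemma pmf_trace_dist:
  assumes "deterministic_pts T" "bounded_comps T n z"
  shows "pmf (trace_dist T n z) \<beta> = prob_set {c \<in> max_comps T z. trace c = \<beta>}"
  using assms(2)
proof (induction arbitrary: \<beta> rule: bounded_comps_induct)
  case (final n z)
  then show ?case
    by (cases "\<beta> = []")
      (simp_all add: trace_dist_final max_comps_eq_maximal_comps maximal_comps_final prob_set_def
        Collect_conv_if)
next
  case (step n z a \<pi>)
  have fin: "finite (set_pmf \<pi>)"
    using finite_set_pmf_transition[OF assms(1) step.hyps(1)] .
  have fin_max: "finite {c \<in> max_comps T z'. P c}" if "z' \<in> set_pmf \<pi>" for z' P
    using finite_comps[OF assms(1) bounded_comps_step[OF step.hyps(2,1) that]]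
    by (rule rev_finite_subset) (auto simp: max_comps_def)
  have succ: "pmf (map_pmf (Cons a) (trace_dist T n z')) \<beta> =
      prob_set {c \<in> max_comps T z'. a # trace c = \<beta>}" if "z' \<in> set_pmf \<pi>" for z'
    using step.IH[OF that] by (cases \<beta>) (simp_all add: pmf_map_Cons prob_set_def)
  have "prob_set {c \<in> max_comps T z. trace c = \<beta>} =
      prob_set (step_comps a \<pi> (\<lambda>z'. {c \<in> max_comps T z'. a # trace c = \<beta>}))"
    by (simp add: max_comps_step[OF assms(1) step.hyps(1)] step_comps_Collect)
  also have "\<dots> = (\<Sum>z'\<in>set_pmf \<pi>. pmf \<pi> z' * pmf (map_pmf (Cons a) (trace_dist T n z')) \<beta>)"
    using fin fin_max succ by (simp add: prob_set_step_comps)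
  also have "\<dots> = pmf (trace_dist T (Suc n) z) \<beta>"
    unfolding trace_dist_step[OF assms(1) step.hyps(1)]
    by (simp add: pmf_bind_finite_support[OF fin])
  finally show ?case ..
qed

lemma finite_set_trace_dist:
  assumes "deterministic_pts T" "bounded_comps T n z"
  shows "finite (set_pmf (trace_dist T n z))"
proof (rule finite_subset)
  show "set_pmf (trace_dist T n z) \<subseteq> trace ` comps T z"
  proof
    fix \<beta>
    assume "\<beta> \<in> set_pmf (trace_dist T n z)"
    then have "prob_set {c \<in> max_comps T z. trace c = \<beta>} \<noteq> 0"
      by (simp add: set_pmf_eq pmf_trace_dist[OF assms])
    then have "{c \<in> max_comps T z. trace c = \<beta>} \<noteq> {}"
      by (metis prob_set_def sum.empty)
    then show "\<beta> \<in> trace ` comps T z"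
      by (auto simp: max_comps_def)
  qed
  show "finite (trace ` comps T z)"
    using finite_comps[OF assms] by simp
qed

lemma prob_weak_comps:
  assumes "deterministic_pts T" "bounded_comps T n z"
  shows "prob_set (weak_comps T z \<alpha>) = measure_pmf.prob (trace_dist T n z) {\<beta>. prefix \<alpha> (vis \<beta>)}"
  using assms(2)
proof (induction arbitrary: \<alpha> rule: bounded_comps_induct)
  case (final n z)
  then show ?case
    by (simp add: trace_dist_final weak_comps_eq_maximal_comps maximal_comps_final prob_set_def)
next
  case (step n z a \<pi>)
  have fin: "finite (set_pmf \<pi>)"
    using finite_set_pmf_transition[OF assms(1) step.hyps(1)] .
  have fin_weak: "finite (weak_comps T z' \<gamma>)" if "z' \<in> set_pmf \<pi>" for z' \<gamma>
    using finite_comps[OF assms(1) bounded_comps_step[OF step.hyps(2,1) that]]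
    by (rule rev_finite_subset) (auto simp: weak_comps_def)
  have dist: "measure_pmf.prob (trace_dist T (Suc n) z) {\<beta>. prefix \<alpha> (vis \<beta>)} =
      (\<Sum>z'\<in>set_pmf \<pi>. pmf \<pi> z' * measure_pmf.prob (trace_dist T n z') {\<beta>. prefix \<alpha> (vis (a # \<beta>))})"
    unfolding trace_dist_step[OF assms(1) step.hyps(1)]
    by (simp add: measure_bind_pmf_finite_support[OF fin] vimage_def)
  show ?case
  proof (cases a)
    case Tau
    then show ?thesis
      using step.hyps(1) fin fin_weak step.IH
      by (simp add: dist weak_comps_step_Tau[OF assms(1)] prob_set_step_comps)
  next
    case (Act b)
    show ?thesis
    proof (cases \<alpha>)
      case Nil
      then show ?thesis
        using step.hyps(1) Act
        by (simp add: dist weak_comps_step_Act[OF assms(1)] prob_set_def sum_pmf_eq_1[OF fin])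
    next
      case (Cons b' \<alpha>')
      then show ?thesis
        unfolding dist using step.hyps(1) Act fin fin_weak step.IH
        by (cases "b' = b")
          (simp_all add: weak_comps_step_Act[OF assms(1)] prob_set_step_comps,
           simp add: prob_set_def)
    qed
  qed
qed

lemma weak_comps_prob_eq_iff:
  assumes "deterministic_pts T" "bounded_comps T n z"
    and "deterministic_pts T'" "bounded_comps T' n' z'"
  shows "(\<forall>\<alpha>. prob_set (weak_comps T z \<alpha>) = prob_set (weak_comps T' z' \<alpha>)) \<longleftrightarrow>
    map_pmf vis (trace_dist T n z) = map_pmf vis (trace_dist T' n' z')"
proof -
  have "prob_set (weak_comps T z \<alpha>) =
      measure_pmf.prob (map_pmf vis (trace_dist T n z)) {\<gamma>. prefix \<alpha> \<gamma>}"
    and "prob_set (weak_comps T' z' \<alpha>) =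
      measure_pmf.prob (map_pmf vis (trace_dist T' n' z')) {\<gamma>. prefix \<alpha> \<gamma>}"
    for \<alpha>
    by (simp_all add: prob_weak_comps[OF assms(1,2)] prob_weak_comps[OF assms(3,4)] vimage_def)
  moreover have "set_pmf (map_pmf vis (trace_dist T n z)) \<subseteq> {\<gamma>. length \<gamma> \<le> max n n'}"
    and "set_pmf (map_pmf vis (trace_dist T' n' z')) \<subseteq> {\<gamma>. length \<gamma> \<le> max n n'}"
    by (auto dest!: length_vis_trace_dist simp: le_max_iff_disj)
  ultimately show ?thesis
    using pmf_eqI_prefix by metis
qed

section \<open>Resolutions and the logic\<close>

lemma deterministic_resolution:
  "is_resolution T s Z TZ corr z0 \<Longrightarrow> deterministic_pts TZ"
  unfolding is_resolution_def deterministic_pts_def by fast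

lemma resolution_comp_length:
  assumes res: "is_resolution T s Z TZ corr z0"
  shows "is_comp TZ z c \<Longrightarrow> z \<in> Z \<Longrightarrow> \<exists>c'. is_comp T (corr z) c' \<and> length c' = length c"
proof (induction rule: is_comp.induct)
  case (comp_Nil z)
  then show ?case
    using is_comp.comp_Nil by fastforce
next
  case (comp_Cons z a \<pi> z' c)
  have "z' \<in> Z"
    using res comp_Cons.hyps(1,2) unfolding is_resolution_def by blast
  then obtain c' where c': "is_comp T (corr z') c'" "length c' = length c"
    using comp_Cons.IH by blast
  obtain \<pi>' where \<pi>': "(corr z, a, \<pi>') \<in> T" "\<forall>y\<in>Z. pmf \<pi> y = pmf \<pi>' (corr y)"
    using res comp_Cons.hyps(1) unfolding is_resolution_def by fast
  have "corr z' \<in> set_pmf \<pi>'"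
    using \<pi>'(2) \<open>z' \<in> Z\<close> comp_Cons.hyps(2) by (metis set_pmf_iff)
  then show ?case
    using c' \<pi>'(1) by (intro exI[of _ "(a, \<pi>', corr z') # c'"]) simp
qed

lemma bounded_comps_resolution:
  assumes res: "is_resolution T s Z TZ corr z0" and bounded: "bounded_comps T n s"
  shows "bounded_comps TZ n z0"
  unfolding bounded_comps_def
proof
  fix c
  assume "c \<in> comps TZ z0"
  moreover have "z0 \<in> Z" "corr z0 = s"
    using res unfolding is_resolution_def by auto
  ultimately obtain c' where "is_comp T s c'" "length c' = length c"
    using resolution_comp_length[OF res] by (fastforce simp: comps_def)
  then show "length c \<le> n"
    using bounded by (auto simp: bounded_comps_def comps_def)
qed

fun tform_of :: "'a act list \<Rightarrow> 'a tform" where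
  "tform_of [] = TTop"
| "tform_of (a # \<beta>) = Diam a (tform_of \<beta>)"

lemma tf_trace_tform_of [simp]: "tf_trace (tform_of \<beta>) = \<beta>"
  by (induction \<beta>) auto

lemma tform_of_tf_trace [simp]: "tform_of (tf_trace \<Phi>) = \<Phi>"
  by (induction \<Phi>) auto

lemma sat_c_depth_iff: "sat_c c \<Phi> \<and> length c = depth \<Phi> \<longleftrightarrow> trace c = tf_trace \<Phi>"
proof (induction \<Phi> arbitrary: c)
  case (Diam a \<Phi>)
  show ?case
  proof (cases c)
    case (Cons x d)
    then show ?thesis
      using Diam.IH[of d] by (cases x) simp
  qed simp
qed (simp add: trace_def)

lemma pmf_map_tform_of: "pmf (map_pmf tform_of p) \<Phi> = pmf p (tf_trace \<Phi>)"
proof -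
  have "inj tform_of"
    by (rule inj_on_inverseI[where g = tf_trace]) simp
  then show ?thesis
    using pmf_map_inj'[of tform_of p "tf_trace \<Phi>"] by simp
qed

lemma sat_resolution_iff:
  assumes "deterministic_pts T" "bounded_comps T n z" "finite (set_pmf \<Psi>)"
  shows "(\<forall>\<Phi>\<in>set_pmf \<Psi>. prob_set {c \<in> max_comps T z. sat_c c \<Phi> \<and> length c = depth \<Phi>} = pmf \<Psi> \<Phi>)
    \<longleftrightarrow> \<Psi> = map_pmf tform_of (trace_dist T n z)"
proof -
  have "prob_set {c \<in> max_comps T z. sat_c c \<Phi> \<and> length c = depth \<Phi>} =
      pmf (map_pmf tform_of (trace_dist T n z)) \<Phi>" for \<Phi>
    by (simp add: pmf_map_tform_of pmf_trace_dist[OF assms(1,2)] sat_c_depth_iff)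
  then show ?thesis
    using pmf_eqI_finite_support[OF assms(3)] by auto
qed

lemma mem_Lw_iff:
  assumes bounded: "bounded_comps T n s"
  shows "\<Psi> \<in> Lw T s \<longleftrightarrow>
    (\<exists>Z TZ corr z. is_resolution T s Z TZ corr z \<and> \<Psi> = map_pmf tform_of (trace_dist TZ n z))"
proof
  assume "\<Psi> \<in> Lw T s"
  then obtain Z TZ corr z where res: "is_resolution T s Z TZ corr z" and fin: "finite (set_pmf \<Psi>)"
    and sat: "\<forall>\<Phi>\<in>set_pmf \<Psi>. prob_set {c \<in> max_comps TZ z. sat_c c \<Phi> \<and> length c = depth \<Phi>} = pmf \<Psi> \<Phi>"
    unfolding Lw_def sat_def by blast
  then have "\<Psi> = map_pmf tform_of (trace_dist TZ n z)"
    using sat_resolution_iff[OF deterministic_resolution[OF res]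
        bounded_comps_resolution[OF res bounded]] by blast
  then show "\<exists>Z TZ corr z. is_resolution T s Z TZ corr z \<and> \<Psi> = map_pmf tform_of (trace_dist TZ n z)"
    using res by blast
next
  assume "\<exists>Z TZ corr z. is_resolution T s Z TZ corr z \<and> \<Psi> = map_pmf tform_of (trace_dist TZ n z)"
  then obtain Z TZ corr z where res: "is_resolution T s Z TZ corr z"
    and \<Psi>: "\<Psi> = map_pmf tform_of (trace_dist TZ n z)"
    by blast
  note det = deterministic_resolution[OF res] and bnd = bounded_comps_resolution[OF res bounded]
  have fin: "finite (set_pmf \<Psi>)"
    using finite_set_trace_dist[OF det bnd] by (simp add: \<Psi>)
  then have "\<forall>\<Phi>\<in>set_pmf \<Psi>. prob_set {c \<in> max_comps TZ z. sat_c c \<Phi> \<and> length c = depth \<Phi>} = pmf \<Psi> \<Phi>"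
    using sat_resolution_iff[OF det bnd] \<Psi> by blast
  then show "\<Psi> \<in> Lw T s"
    using res fin unfolding Lw_def sat_def by blast
qed

lemma vis_map_Act [simp]: "vis (map Act \<gamma>) = \<gamma>"
  by (induction \<gamma>) auto

lemma dag_equiv_map_tform_of_iff:
  fixes p q :: "'a act list pmf"
  shows "dag_equiv (map_pmf tform_of p) (map_pmf tform_of q) \<longleftrightarrow> map_pmf vis p = map_pmf vis q"
proof -
  have class_prob: "measure_pmf.prob (map_pmf tform_of r) {\<Phi>'. tf_equiv \<Phi>' \<Phi>} =
      pmf (map_pmf vis r) (vis (tf_trace \<Phi>))" for r :: "'a act list pmf" and \<Phi>
    by (simp add: tf_equiv_def trace_equiv_def pmf_map vimage_def)
  have "(\<forall>\<Phi>. pmf (map_pmf vis p) (vis (tf_trace \<Phi>)) = pmf (map_pmf vis q) (vis (tf_trace \<Phi>))) \<longleftrightarrow>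
      (\<forall>\<gamma>. pmf (map_pmf vis p) \<gamma> = pmf (map_pmf vis q) \<gamma>)"
    by (metis tf_trace_tform_of vis_map_Act)
  then show ?thesis
    unfolding dag_equiv_def class_prob pmf_eq_iff .
qed

lemma dag_equiv_sym: "dag_equiv \<Psi> \<Psi>' \<longleftrightarrow> dag_equiv \<Psi>' \<Psi>"
  unfolding dag_equiv_def by metis

lemma resolution_weak_comps_prob_eq_iff:
  assumes res: "is_resolution T s Z TZ corr z" and bs: "bounded_comps T n s"
    and res': "is_resolution T t Z' TZ' corr' z'" and bt: "bounded_comps T m t"
  shows "(\<forall>\<alpha>. prob_set (weak_comps TZ z \<alpha>) = prob_set (weak_comps TZ' z' \<alpha>)) \<longleftrightarrow>
    dag_equiv (map_pmf tform_of (trace_dist TZ n z)) (map_pmf tform_of (trace_dist TZ' m z'))"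
  unfolding dag_equiv_map_tform_of_iff
  by (rule weak_comps_prob_eq_iff[OF
        deterministic_resolution[OF res] bounded_comps_resolution[OF res bs]
        deterministic_resolution[OF res'] bounded_comps_resolution[OF res' bt]])

lemma wpt_sim_iff_Lw:
  assumes bs: "bounded_comps T n s" and bt: "bounded_comps T m t"
  shows "wpt_sim T s t \<longleftrightarrow> (\<forall>\<Psi>\<in>Lw T s. \<exists>\<Psi>'\<in>Lw T t. dag_equiv \<Psi> \<Psi>')"
proof
  assume sim: "wpt_sim T s t"
  show "\<forall>\<Psi>\<in>Lw T s. \<exists>\<Psi>'\<in>Lw T t. dag_equiv \<Psi> \<Psi>'"
  proof
    fix \<Psi>
    assume "\<Psi> \<in> Lw T s"
    then obtain Z TZ corr z where res: "is_resolution T s Z TZ corr z"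
      and \<Psi>: "\<Psi> = map_pmf tform_of (trace_dist TZ n z)"
      using mem_Lw_iff[OF bs] by blast
    then obtain Z' TZ' corr' z' where res': "is_resolution T t Z' TZ' corr' z'"
      and "\<forall>\<alpha>. prob_set (weak_comps TZ z \<alpha>) = prob_set (weak_comps TZ' z' \<alpha>)"
      using sim unfolding wpt_sim_def by blast
    then have "dag_equiv \<Psi> (map_pmf tform_of (trace_dist TZ' m z'))"
      using resolution_weak_comps_prob_eq_iff[OF res bs res' bt] \<Psi> by simp
    moreover have "map_pmf tform_of (trace_dist TZ' m z') \<in> Lw T t"
      using mem_Lw_iff[OF bt] res' by blast
    ultimately show "\<exists>\<Psi>'\<in>Lw T t. dag_equiv \<Psi> \<Psi>'"
      by blast
  qed
next
  assume Lw_related: "\<forall>\<Psi>\<in>Lw T s. \<exists>\<Psi>'\<in>Lw T t. dag_equiv \<Psi> \<Psi>'"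
  show "wpt_sim T s t"
    unfolding wpt_sim_def
  proof (intro allI impI)
    fix Z TZ corr z
    assume res: "is_resolution T s Z TZ corr z"
    then have "map_pmf tform_of (trace_dist TZ n z) \<in> Lw T s"
      using mem_Lw_iff[OF bs] by blast
    then obtain \<Psi>' where "\<Psi>' \<in> Lw T t"
      and related: "dag_equiv (map_pmf tform_of (trace_dist TZ n z)) \<Psi>'"
      using Lw_related by blast
    then obtain Z' TZ' corr' z' where res': "is_resolution T t Z' TZ' corr' z'"
      and "\<Psi>' = map_pmf tform_of (trace_dist TZ' m z')"
      using mem_Lw_iff[OF bt] by blast
    with related show "\<exists>Z' TZ' corr' z'. is_resolution T t Z' TZ' corr' z' \<and>
        (\<forall>\<alpha>. prob_set (weak_comps TZ z \<alpha>) = prob_set (weak_comps TZ' z' \<alpha>))"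
      using resolution_weak_comps_prob_eq_iff[OF res bs res' bt] by blast
  qed
qed

theorem theorem13:
  fixes T :: "('s, 'a) pts" and s t :: 's
  assumes fin_supp: "\<forall>(u, a, \<pi>)\<in>T. finite (set_pmf \<pi>)"
    and image_finite: "\<forall>u. finite {(a, \<pi>). (u, a, \<pi>) \<in> T}"
    and finite_s: "\<exists>n. \<forall>c\<in>comps T s. length c \<le> n"
    and finite_t: "\<exists>n. \<forall>c\<in>comps T t. length c \<le> n"
  shows "weak_trace_equiv T s t \<longleftrightarrow> Lset_equiv (Lw T s) (Lw T t)"
proof -
  obtain n m where bs: "bounded_comps T n s" and bt: "bounded_comps T m t"
    using finite_s finite_t unfolding bounded_comps_def by blast
  have "wpt_sim T t s \<longleftrightarrow> (\<forall>\<Psi>'\<in>Lw T t. \<exists>\<Psi>\<in>Lw T s. dag_equiv \<Psi> \<Psi>')"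
    using wpt_sim_iff_Lw[OF bt bs] by (simp only: dag_equiv_sym)
  then show ?thesis
    unfolding weak_trace_equiv_def Lset_equiv_def using wpt_sim_iff_Lw[OF bs bt] by simp
qed

end
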